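(* Let $Q$ be a propositional proof system extending $CF$ that is not sound (i.e. $Q$ proves some proposition that is not a tautology). Then $Q$ proves every proposition by a proof of length linear in the length of the proposition.
   Context: Here a (possibly unsound) proof system extending $CF$ is the Circuit Frege system $CF$ (Frege rules on Boolean circuits plus a rule passing from a circuit to any circuit unfolding to the same formula) augmented with a polynomial-time decidable set of axiom schemas, any substitution instance of which may be used as an axiom. Propositions are Boolean circuits. *)

theory Defs
  imports Main
begin

datatype form = FVar nat | FTop | FBot | FNot form | FAnd form form | FOr form form | FImp form form

fun eval :: "(nat \<Rightarrow> bool) \<Rightarrow> form \<Rightarrow> bool" where
  "eval v (FVar i) = v i"
| "eval v FTop = True"
| "eval v FBot = False"
| "eval v (FNot a) = (\<not> eval v a)"
| "eval v (FAnd a b) = (eval v a \<and> eval v b)"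
| "eval v (FOr a b) = (eval v a \<or> eval v b)"
| "eval v (FImp a b) = (eval v a \<longrightarrow> eval v b)"

text \<open>A circuit is a list of gates together with an output gate; a gate at position k may
  only refer to gates at positions strictly below k.  Its size is the number of gates.\<close>

datatype gate = GVar nat | GTop | GBot | GNot nat | GAnd nat nat | GOr nat nat | GImp nat nat

type_synonym circuit = "gate list \<times> nat"

fun gate_refs :: "gate \<Rightarrow> nat set" where
  "gate_refs (GNot j) = {j}"
| "gate_refs (GAnd j l) = {j, l}"
| "gate_refs (GOr j l) = {j, l}"
| "gate_refs (GImp j l) = {j, l}"
| "gate_refs _ = {}"

definition wf_circuit :: "circuit \<Rightarrow> bool" where
  "wf_circuit C \<longleftrightarrow> snd C < length (fst C) \<and>
     (\<forall>k < length (fst C). \<forall>j \<in> gate_refs (fst C ! k). j < k)"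

definition csize :: "circuit \<Rightarrow> nat" where
  "csize C = length (fst C)"

text \<open>Unfolding of a circuit into a formula (ill-formed references unfold to FTop;
  this never happens for well-formed circuits).\<close>

function unf :: "gate list \<Rightarrow> nat \<Rightarrow> form" where
  "unf gs k = (case gs ! k of
      GVar i \<Rightarrow> FVar i
    | GTop \<Rightarrow> FTop
    | GBot \<Rightarrow> FBot
    | GNot j \<Rightarrow> (if j < k then FNot (unf gs j) else FTop)
    | GAnd j l \<Rightarrow> (if j < k \<and> l < k then FAnd (unf gs j) (unf gs l) else FTop)
    | GOr j l \<Rightarrow> (if j < k \<and> l < k then FOr (unf gs j) (unf gs l) else FTop)
    | GImp j l \<Rightarrow> (if j < k \<and> l < k then FImp (unf gs j) (unf gs l) else FTop))"
  by auto
termination by (relation "measure snd") auto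

definition unfold_circuit :: "circuit \<Rightarrow> form" where
  "unfold_circuit C = unf (fst C) (snd C)"

definition tautology :: "circuit \<Rightarrow> bool" where
  "tautology C \<longleftrightarrow> (\<forall>v. eval v (unfold_circuit C))"

fun shift_gate :: "nat \<Rightarrow> gate \<Rightarrow> gate" where
  "shift_gate n (GNot j) = GNot (j + n)"
| "shift_gate n (GAnd j l) = GAnd (j + n) (l + n)"
| "shift_gate n (GOr j l) = GOr (j + n) (l + n)"
| "shift_gate n (GImp j l) = GImp (j + n) (l + n)"
| "shift_gate n g = g"

fun remap_gate :: "nat list \<Rightarrow> gate \<Rightarrow> gate" where
  "remap_gate m (GNot j) = GNot (m ! j)"
| "remap_gate m (GAnd j l) = GAnd (m ! j) (m ! l)"
| "remap_gate m (GOr j l) = GOr (m ! j) (m ! l)"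
| "remap_gate m (GImp j l) = GImp (m ! j) (m ! l)"
| "remap_gate m g = g"

fun cat_circuits :: "circuit list \<Rightarrow> gate list \<Rightarrow> nat list \<Rightarrow> gate list \<times> nat list" where
  "cat_circuits [] gs os = (gs, os)"
| "cat_circuits ((h, out) # Ds) gs os =
     cat_circuits Ds (gs @ map (shift_gate (length gs)) h) (os @ [length gs + out])"

text \<open>Place the gates of the schema on top; variable gate i (for i below the number
  of substituted circuits) is replaced by the output of the i-th substituted circuit.\<close>
fun place :: "nat list \<Rightarrow> gate list \<Rightarrow> nat list \<Rightarrow> gate list \<Rightarrow> gate list \<times> nat list" where
  "place os [] m acc = (acc, m)"
| "place os (g # gs) m acc =
     (case g of
        GVar i \<Rightarrow> (if i < length os then place os gs (m @ [os ! i]) acc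
                   else place os gs (m @ [length acc]) (acc @ [GVar i]))
      | _ \<Rightarrow> place os gs (m @ [length acc]) (acc @ [remap_gate m g]))"

definition inst :: "circuit \<Rightarrow> circuit list \<Rightarrow> circuit" where
  "inst S Ds = (let (gs, os) = cat_circuits Ds [] [];
                    (gs', m) = place os (fst S) [] gs
                in (gs', m ! snd S))"

fun comp :: "form \<Rightarrow> gate list \<Rightarrow> gate list \<times> nat" where
  "comp (FVar i) acc = (acc @ [GVar i], length acc)"
| "comp FTop acc = (acc @ [GTop], length acc)"
| "comp FBot acc = (acc @ [GBot], length acc)"
| "comp (FNot a) acc = (let (a1, o1) = comp a acc in (a1 @ [GNot o1], length a1))"
| "comp (FAnd a b) acc = (let (a1, o1) = comp a acc; (a2, o2) = comp b a1
                          in (a2 @ [GAnd o1 o2], length a2))"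
| "comp (FOr a b) acc = (let (a1, o1) = comp a acc; (a2, o2) = comp b a1
                         in (a2 @ [GOr o1 o2], length a2))"
| "comp (FImp a b) acc = (let (a1, o1) = comp a acc; (a2, o2) = comp b a1
                          in (a2 @ [GImp o1 o2], length a2))"

definition circ_of :: "form \<Rightarrow> circuit" where
  "circ_of \<phi> = comp \<phi> []"

abbreviation "pA \<equiv> FVar 0"
abbreviation "pB \<equiv> FVar 1"
abbreviation "pC \<equiv> FVar 2"

definition frege_rules :: "(form list \<times> form) list" where
  "frege_rules =
   [ ([], FImp pA (FImp pB pA)),
     ([], FImp (FImp pA pB) (FImp (FImp pA (FImp pB pC)) (FImp pA pC))),
     ([], FImp pA (FImp pB (FAnd pA pB))),
     ([], FImp (FAnd pA pB) pA),
     ([], FImp (FAnd pA pB) pB),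
     ([], FImp pA (FOr pA pB)),
     ([], FImp pB (FOr pA pB)),
     ([], FImp (FImp pA pC) (FImp (FImp pB pC) (FImp (FOr pA pB) pC))),
     ([], FImp (FImp pA pB) (FImp (FImp pA (FNot pB)) (FNot pA))),
     ([], FImp (FNot (FNot pA)) pA),
     ([], FTop),
     ([], FNot FBot),
     ([], FImp FBot pA),
     ([pA, FImp pA pB], pB) ]"

text \<open>A is the set of additional axiom schemas (circuits); any substitution instance may be
  used as an axiom.\<close>

definition cf_step :: "circuit set \<Rightarrow> circuit list \<Rightarrow> circuit \<Rightarrow> bool" where
  "cf_step A prev C \<longleftrightarrow>
     (\<exists>(ps, c) \<in> set frege_rules. \<exists>Ds. (\<forall>D \<in> set Ds. wf_circuit D) \<and>
         C = inst (circ_of c) Ds \<and> (\<forall>p \<in> set ps. inst (circ_of p) Ds \<in> set prev))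
   \<or> (\<exists>S \<in> A. wf_circuit S \<and> (\<exists>Ds. (\<forall>D \<in> set Ds. wf_circuit D) \<and> C = inst S Ds))
   \<or> (\<exists>C' \<in> set prev. unfold_circuit C' = unfold_circuit C)"

definition is_proof :: "circuit set \<Rightarrow> circuit list \<Rightarrow> circuit \<Rightarrow> bool" where
  "is_proof A \<pi> C \<longleftrightarrow> \<pi> \<noteq> [] \<and> last \<pi> = C \<and>
     (\<forall>k < length \<pi>. wf_circuit (\<pi> ! k) \<and> cf_step A (take k \<pi>) (\<pi> ! k))"

definition proof_length :: "circuit list \<Rightarrow> nat" where
  "proof_length \<pi> = sum_list (map csize \<pi>)"

definition provable :: "circuit set \<Rightarrow> circuit \<Rightarrow> bool" where
  "provable A C \<longleftrightarrow> (\<exists>\<pi>. is_proof A \<pi> C)"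

definition sound :: "circuit set \<Rightarrow> bool" where
  "sound A \<longleftrightarrow> (\<forall>C. provable A C \<longrightarrow> tautology C)"

end

(* An unsound system CF + A has an axiom schema S in A with a falsifying assignment v, since
   every line of a derivation whose axioms are tautologies is a tautology.  Substituting the
   constants FTop/FBot for the variables of S according to v gives a closed false axiom
   instance F.  Frege decides closed formulas (Kalmar's lemma), so F derives its own negation
   and hence FBot has a fixed proof pi0.  Every circuit C then follows from pi0 by the axiom
   FBot --> C, one modus ponens and the unfolding rule, in five more lines of size O(|C|). *)

theory Submission
  imports Defs "HOL-Library.Sublist"
begin

declare unf.simps [simp del]

definition wf_gates :: "gate list \<Rightarrow> bool" where
  "wf_gates gs \<longleftrightarrow> (\<forall>k < length gs. \<forall>j \<in> gate_refs (gs ! k). j < k)"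

lemma wf_circuit_iff: "wf_circuit C \<longleftrightarrow> snd C < length (fst C) \<and> wf_gates (fst C)"
  by (simp add: wf_circuit_def wf_gates_def)

lemma wf_gates_Nil [simp]: "wf_gates []"
  by (simp add: wf_gates_def)

lemma wf_gates_snoc:
  "wf_gates gs \<Longrightarrow> \<forall>j \<in> gate_refs g. j < length gs \<Longrightarrow> wf_gates (gs @ [g])"
  unfolding wf_gates_def by (auto simp: nth_append less_Suc_eq)

lemma wf_gates_append_shift:
  assumes "wf_gates gs" and "wf_gates hs"
  shows "wf_gates (gs @ map (shift_gate (length gs)) hs)"
  unfolding wf_gates_def
proof (intro allI impI ballI)
  fix k j
  assume k: "k < length (gs @ map (shift_gate (length gs)) hs)"
    and j: "j \<in> gate_refs ((gs @ map (shift_gate (length gs)) hs) ! k)"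
  show "j < k"
  proof (cases "k < length gs")
    case True
    then show ?thesis using assms(1) j by (auto simp: wf_gates_def nth_append)
  next
    case False
    then obtain i where i: "k = length gs + i" "i < length hs"
      using k by (metis add_less_cancel_left le_iff_add length_append length_map not_less)
    have "j \<in> gate_refs (shift_gate (length gs) (hs ! i))" using j i by (simp add: nth_append)
    then show ?thesis using assms(2) i by (cases "hs ! i") (auto simp: wf_gates_def)
  qed
qed

lemma unf_append: "k < length gs \<Longrightarrow> unf (gs @ hs) k = unf gs k"
proof (induction k rule: less_induct)
  case (less k)
  then show ?case by (subst (1 2) unf.simps) (cases "gs ! k"; simp add: nth_append)
qed

lemma unf_prefix: "prefix gs hs \<Longrightarrow> k < length gs \<Longrightarrow> unf hs k = unf gs k"
  by (auto elim: prefixE simp: unf_append)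

lemma unf_shift:
  "k < length hs \<Longrightarrow> unf (gs @ map (shift_gate (length gs)) hs) (length gs + k) = unf hs k"
proof (induction k rule: less_induct)
  case (less k)
  then show ?case by (subst (1 2) unf.simps) (cases "hs ! k"; simp add: nth_append add.commute)
qed

lemma unf_GVar: "gs ! k = GVar i \<Longrightarrow> unf gs k = FVar i"
  by (subst unf.simps) simp

lemma unf_snoc [simp]:
  "unf (gs @ [GVar i]) (length gs) = FVar i"
  "unf (gs @ [GTop]) (length gs) = FTop"
  "unf (gs @ [GBot]) (length gs) = FBot"
  "j < length gs \<Longrightarrow> unf (gs @ [GNot j]) (length gs) = FNot (unf gs j)"
  "j < length gs \<Longrightarrow> l < length gs \<Longrightarrow> unf (gs @ [GAnd j l]) (length gs) = FAnd (unf gs j) (unf gs l)"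
  "j < length gs \<Longrightarrow> l < length gs \<Longrightarrow> unf (gs @ [GOr j l]) (length gs) = FOr (unf gs j) (unf gs l)"
  "j < length gs \<Longrightarrow> l < length gs \<Longrightarrow> unf (gs @ [GImp j l]) (length gs) = FImp (unf gs j) (unf gs l)"
  by (subst unf.simps; simp add: unf_append)+

lemma comp_binary_step:
  assumes "prefix acc a1 \<and> wf_gates a1 \<and> k1 < length a1 \<and> unf a1 k1 = a"
    and "wf_gates a1 \<Longrightarrow> prefix a1 a2 \<and> wf_gates a2 \<and> k2 < length a2 \<and> unf a2 k2 = b"
    and "gate_refs g = {k1, k2}"
    and "k1 < length a2 \<Longrightarrow> k2 < length a2 \<Longrightarrow>
      unf (a2 @ [g]) (length a2) = F (unf a2 k1) (unf a2 k2)"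
  shows "prefix acc (a2 @ [g]) \<and> wf_gates (a2 @ [g]) \<and>
    length a2 < length (a2 @ [g]) \<and> unf (a2 @ [g]) (length a2) = F a b"
proof -
  have "prefix a1 a2" "wf_gates a2" "k2 < length a2" "unf a2 k2 = b"
    using assms(1,2) by auto
  moreover have "k1 < length a2" "unf a2 k1 = a"
    using assms(1) prefix_length_le[OF \<open>prefix a1 a2\<close>] unf_prefix[OF \<open>prefix a1 a2\<close>] by auto
  ultimately show ?thesis
    using assms(1,3,4) by (auto simp: wf_gates_snoc intro: prefix_order.trans)
qed

lemma comp_correct:
  "comp \<phi> acc = (acc', k) \<Longrightarrow> wf_gates acc \<Longrightarrow>
   prefix acc acc' \<and> wf_gates acc' \<and> k < length acc' \<and> unf acc' k = \<phi>"
proof (induction \<phi> arbitrary: acc acc' k)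
  case (FNot a)
  obtain a1 k1 where "comp a acc = (a1, k1)" "acc' = a1 @ [GNot k1]" "k = length a1"
    using FNot.prems(1) by (auto split: prod.splits)
  then show ?case using FNot by (fastforce simp: wf_gates_snoc intro: prefix_order.trans)
next
  case (FAnd a b)
  obtain a1 k1 a2 k2 where c: "comp a acc = (a1, k1)" "comp b a1 = (a2, k2)"
    and r: "acc' = a2 @ [GAnd k1 k2]" "k = length a2"
    using FAnd.prems(1) by (auto split: prod.splits)
  show ?case
    unfolding r by (rule comp_binary_step[OF FAnd.IH(1)[OF c(1) FAnd.prems(2)] FAnd.IH(2)[OF c(2)]]) auto
next
  case (FOr a b)
  obtain a1 k1 a2 k2 where c: "comp a acc = (a1, k1)" "comp b a1 = (a2, k2)"
    and r: "acc' = a2 @ [GOr k1 k2]" "k = length a2"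
    using FOr.prems(1) by (auto split: prod.splits)
  show ?case
    unfolding r by (rule comp_binary_step[OF FOr.IH(1)[OF c(1) FOr.prems(2)] FOr.IH(2)[OF c(2)]]) auto
next
  case (FImp a b)
  obtain a1 k1 a2 k2 where c: "comp a acc = (a1, k1)" "comp b a1 = (a2, k2)"
    and r: "acc' = a2 @ [GImp k1 k2]" "k = length a2"
    using FImp.prems(1) by (auto split: prod.splits)
  show ?case
    unfolding r by (rule comp_binary_step[OF FImp.IH(1)[OF c(1) FImp.prems(2)] FImp.IH(2)[OF c(2)]]) auto
qed (auto simp: wf_gates_snoc)

lemma circ_of_correct: "wf_circuit (circ_of \<phi>) \<and> unfold_circuit (circ_of \<phi>) = \<phi>"
proof -
  obtain gs k where "comp \<phi> [] = (gs, k)" by fastforce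
  then show ?thesis using comp_correct[of \<phi> "[]" gs k]
    by (simp add: circ_of_def wf_circuit_iff unfold_circuit_def)
qed

lemma wf_circ_of: "wf_circuit (circ_of \<phi>)"
  using circ_of_correct by blast

lemma unfold_circ_of [simp]: "unfold_circuit (circ_of \<phi>) = \<phi>"
  using circ_of_correct by blast

section \<open>Substitution instances\<close>

fun fsubst :: "(nat \<Rightarrow> form) \<Rightarrow> form \<Rightarrow> form" where
  "fsubst \<sigma> (FVar i) = \<sigma> i"
| "fsubst \<sigma> FTop = FTop"
| "fsubst \<sigma> FBot = FBot"
| "fsubst \<sigma> (FNot a) = FNot (fsubst \<sigma> a)"
| "fsubst \<sigma> (FAnd a b) = FAnd (fsubst \<sigma> a) (fsubst \<sigma> b)"
| "fsubst \<sigma> (FOr a b) = FOr (fsubst \<sigma> a) (fsubst \<sigma> b)"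
| "fsubst \<sigma> (FImp a b) = FImp (fsubst \<sigma> a) (fsubst \<sigma> b)"

fun fvars :: "form \<Rightarrow> nat set" where
  "fvars (FVar i) = {i}"
| "fvars FTop = {}"
| "fvars FBot = {}"
| "fvars (FNot a) = fvars a"
| "fvars (FAnd a b) = fvars a \<union> fvars b"
| "fvars (FOr a b) = fvars a \<union> fvars b"
| "fvars (FImp a b) = fvars a \<union> fvars b"

lemma finite_fvars: "finite (fvars \<phi>)"
  by (induction \<phi>) auto

lemma fvars_fsubst: "fvars (fsubst \<sigma> \<phi>) = (\<Union>i \<in> fvars \<phi>. fvars (\<sigma> i))"
  by (induction \<phi>) auto

lemma fsubst_cong: "(\<And>i. i \<in> fvars \<phi> \<Longrightarrow> \<sigma> i = \<tau> i) \<Longrightarrow> fsubst \<sigma> \<phi> = fsubst \<tau> \<phi>"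
  by (induction \<phi>) auto

lemma eval_cong: "(\<And>i. i \<in> fvars \<phi> \<Longrightarrow> v i = w i) \<Longrightarrow> eval v \<phi> = eval w \<phi>"
  by (induction \<phi>) auto

lemma eval_fsubst: "eval v (fsubst \<sigma> \<phi>) = eval (\<lambda>i. eval v (\<sigma> i)) \<phi>"
  by (induction \<phi>) auto

lemma unf_remap_gate:
  assumes "G ! n = g" and "\<forall>j \<in> gate_refs g. j < n" and "\<forall>i. g \<noteq> GVar i"
    and "\<forall>j < n. m ! j < length acc \<and> unf acc (m ! j) = fsubst \<sigma> (unf G j)"
  shows "unf (acc @ [remap_gate m g]) (length acc) = fsubst \<sigma> (unf G n)"
    and "\<forall>j \<in> gate_refs (remap_gate m g). j < length acc"
proof -
  show "unf (acc @ [remap_gate m g]) (length acc) = fsubst \<sigma> (unf G n)"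
    using assms by (subst (2) unf.simps) (cases g; simp)
  show "\<forall>j \<in> gate_refs (remap_gate m g). j < length acc"
    using assms by (cases g) auto
qed

definition place_invariant ::
  "gate list \<Rightarrow> (nat \<Rightarrow> form) \<Rightarrow> nat list \<Rightarrow> nat \<Rightarrow> nat list \<Rightarrow> gate list \<Rightarrow> bool" where
  "place_invariant G \<sigma> os n m acc \<longleftrightarrow> length m = n \<and> wf_gates acc \<and>
     (\<forall>j < n. m ! j < length acc \<and> unf acc (m ! j) = fsubst \<sigma> (unf G j)) \<and>
     (\<forall>i < length os. os ! i < length acc \<and> unf acc (os ! i) = \<sigma> i)"

lemma place_invariant_snoc:
  assumes "place_invariant G \<sigma> os n m acc" and "\<forall>j \<in> gate_refs g. j < length acc"
    and "unf (acc @ [g]) (length acc) = fsubst \<sigma> (unf G n)"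
  shows "place_invariant G \<sigma> os (Suc n) (m @ [length acc]) (acc @ [g])"
  using assms unfolding place_invariant_def
  by (auto simp: wf_gates_snoc nth_append unf_append less_Suc_eq)

lemma place_correct:
  assumes "wf_gates G" and "\<forall>i \<ge> length os. \<sigma> i = FVar i"
  shows "drop n G = rest \<Longrightarrow> n \<le> length G \<Longrightarrow> place_invariant G \<sigma> os n m acc \<Longrightarrow>
    place os rest m acc = (acc', m') \<Longrightarrow>
    place_invariant G \<sigma> os (length G) m' acc' \<and> length acc' \<le> length acc + length rest"
proof (induction rest arbitrary: n m acc)
  case Nil
  then show ?case by simp
next
  case (Cons g rest)
  have "n < length G"
    using Cons.prems(1) by (metis drop_all list.distinct(1) not_less)
  then have n: "n < length G" "G ! n = g" "drop (Suc n) G = rest"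
    using Cons_nth_drop_Suc[of n G] Cons.prems(1) by simp_all
  have refs: "\<forall>j \<in> gate_refs g. j < n"
    using assms(1) n by (auto simp: wf_gates_def)
  note inv = Cons.prems(3)
  consider (subst) i where "g = GVar i" "i < length os"
    | (var) i where "g = GVar i" "\<not> i < length os"
    | (op) "\<forall>i. g \<noteq> GVar i"
    by blast
  then show ?case
  proof cases
    case subst
    then have "place_invariant G \<sigma> os (Suc n) (m @ [os ! i]) acc"
      using inv n by (auto simp: place_invariant_def nth_append less_Suc_eq unf_GVar)
    then show ?thesis using Cons.IH[OF n(3)] Cons.prems(4) subst n(1) by fastforce
  next
    case var
    then have "place_invariant G \<sigma> os (Suc n) (m @ [length acc]) (acc @ [GVar i])"
      using n assms(2) by (intro place_invariant_snoc[OF inv]) (auto simp: unf_GVar)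
    then show ?thesis using Cons.IH[OF n(3)] Cons.prems(4) var n(1) by fastforce
  next
    case op
    have "\<forall>j < n. m ! j < length acc \<and> unf acc (m ! j) = fsubst \<sigma> (unf G j)"
      using inv by (simp add: place_invariant_def)
    note remap = unf_remap_gate[OF n(2) refs op this]
    have "place_invariant G \<sigma> os (Suc n) (m @ [length acc]) (acc @ [remap_gate m g])"
      using remap by (intro place_invariant_snoc[OF inv])
    moreover have "place os rest (m @ [length acc]) (acc @ [remap_gate m g]) = (acc', m')"
      using Cons.prems(4) op by (cases g) auto
    ultimately show ?thesis using Cons.IH[OF n(3)] n(1) by fastforce
  qed
qed

lemma cat_circuits_correct:
  "cat_circuits Ds gs os = (gs', os') \<Longrightarrow> wf_gates gs \<Longrightarrow> \<forall>D \<in> set Ds. wf_circuit D \<Longrightarrow>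
   prefix gs gs' \<and> wf_gates gs' \<and> length gs' = length gs + sum_list (map csize Ds) \<and>
   prefix os os' \<and> length os' = length os + length Ds \<and>
   (\<forall>i < length Ds. os' ! (length os + i) < length gs' \<and>
      unf gs' (os' ! (length os + i)) = unfold_circuit (Ds ! i))"
proof (induction Ds arbitrary: gs os)
  case Nil
  then show ?case by simp
next
  case (Cons D Ds)
  obtain h out where D: "D = (h, out)" by fastforce
  define gs1 where "gs1 = gs @ map (shift_gate (length gs)) h"
  define os1 where "os1 = os @ [length gs + out]"
  have wfD: "out < length h" "wf_gates h"
    using Cons.prems(3) D by (auto simp: wf_circuit_iff)
  have "cat_circuits Ds gs1 os1 = (gs', os')"
    using Cons.prems(1) D by (simp add: gs1_def os1_def)
  moreover have "wf_gates gs1"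
    unfolding gs1_def using Cons.prems(2) wfD(2) by (rule wf_gates_append_shift)
  ultimately have IH: "prefix gs1 gs' \<and> wf_gates gs' \<and>
      length gs' = length gs1 + sum_list (map csize Ds) \<and>
      prefix os1 os' \<and> length os' = length os1 + length Ds \<and>
      (\<forall>i < length Ds. os' ! (length os1 + i) < length gs' \<and>
         unf gs' (os' ! (length os1 + i)) = unfold_circuit (Ds ! i))"
    using Cons.prems(3) by (intro Cons.IH) auto
  then obtain rest where os': "os' = os1 @ rest" by (auto elim: prefixE)
  have "length gs + out < length gs1"
    using wfD by (simp add: gs1_def)
  then have "unf gs' (length gs + out) = unfold_circuit D"
    using IH unf_prefix[of gs1 gs'] unf_shift[OF wfD(1), of gs]
    by (simp add: gs1_def D unfold_circuit_def)
  moreover have "os' ! length os = length gs + out"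
    by (simp add: os' os1_def nth_append)
  ultimately have "\<forall>i < length (D # Ds). os' ! (length os + i) < length gs' \<and>
      unf gs' (os' ! (length os + i)) = unfold_circuit ((D # Ds) ! i)"
    using IH \<open>length gs + out < length gs1\<close> by (auto simp: less_Suc_eq_0_disj os1_def)
  moreover have "prefix gs gs1" "prefix os os1"
    by (simp_all add: gs1_def os1_def)
  moreover have "length gs1 = length gs + csize D" "length os1 = Suc (length os)"
    by (simp_all add: gs1_def os1_def D csize_def)
  ultimately show ?case
    using IH by (auto intro: prefix_order.trans)
qed

definition subst_of :: "circuit list \<Rightarrow> nat \<Rightarrow> form" where
  "subst_of Ds i = (if i < length Ds then unfold_circuit (Ds ! i) else FVar i)"

lemma inst_correct:
  assumes "wf_circuit S" and "\<forall>D \<in> set Ds. wf_circuit D"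
  shows "wf_circuit (inst S Ds) \<and>
    unfold_circuit (inst S Ds) = fsubst (subst_of Ds) (unfold_circuit S) \<and>
    csize (inst S Ds) \<le> csize S + sum_list (map csize Ds)"
proof -
  obtain gs os where cat: "cat_circuits Ds [] [] = (gs, os)" by fastforce
  note C = cat_circuits_correct[OF cat wf_gates_Nil assms(2)]
  obtain G out where S: "S = (G, out)" by fastforce
  have G: "wf_gates G" "out < length G"
    using assms(1) S by (auto simp: wf_circuit_iff)
  obtain gs' m where pl: "place os G [] gs = (gs', m)" by fastforce
  have "\<forall>i \<ge> length os. subst_of Ds i = FVar i"
    using C by (simp add: subst_of_def)
  moreover have "place_invariant G (subst_of Ds) os 0 [] gs"
    using C by (auto simp: place_invariant_def subst_of_def)
  ultimately have P: "place_invariant G (subst_of Ds) os (length G) m gs' \<and>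
      length gs' \<le> length gs + length G"
    using place_correct[OF G(1), of os "subst_of Ds" 0 G "[]" gs gs' m] pl by simp
  have "inst S Ds = (gs', m ! out)"
    using cat pl S by (simp add: inst_def)
  then show ?thesis
    using P G C by (auto simp: place_invariant_def wf_circuit_iff unfold_circuit_def csize_def S)
qed

lemma wf_inst: "wf_circuit S \<Longrightarrow> \<forall>D \<in> set Ds. wf_circuit D \<Longrightarrow> wf_circuit (inst S Ds)"
  using inst_correct by blast

lemma unfold_inst:
  "wf_circuit S \<Longrightarrow> \<forall>D \<in> set Ds. wf_circuit D \<Longrightarrow>
   unfold_circuit (inst S Ds) = fsubst (subst_of Ds) (unfold_circuit S)"
  using inst_correct by blast

lemma csize_inst:
  "wf_circuit S \<Longrightarrow> \<forall>D \<in> set Ds. wf_circuit D \<Longrightarrow>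
   csize (inst S Ds) \<le> csize S + sum_list (map csize Ds)"
  using inst_correct by blast

section \<open>Soundness of CF + A\<close>

definition derivation :: "circuit set \<Rightarrow> circuit list \<Rightarrow> bool" where
  "derivation A \<pi> \<longleftrightarrow> (\<forall>k < length \<pi>. wf_circuit (\<pi> ! k) \<and> cf_step A (take k \<pi>) (\<pi> ! k))"

lemma is_proof_iff_derivation: "is_proof A \<pi> C \<longleftrightarrow> \<pi> \<noteq> [] \<and> last \<pi> = C \<and> derivation A \<pi>"
  by (simp add: is_proof_def derivation_def)

lemma derivation_Nil [simp]: "derivation A []"
  by (simp add: derivation_def)

lemma derivation_snoc [simp]:
  "derivation A (\<pi> @ [X]) \<longleftrightarrow> derivation A \<pi> \<and> wf_circuit X \<and> cf_step A \<pi> X"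
  unfolding derivation_def by (auto simp: nth_append less_Suc_eq)

lemma derivation_snocI: "derivation A \<pi> \<Longrightarrow> wf_circuit X \<Longrightarrow> cf_step A \<pi> X \<Longrightarrow> derivation A (\<pi> @ [X])"
  by simp

lemma cf_step_mono: "cf_step A prev C \<Longrightarrow> set prev \<subseteq> set prev' \<Longrightarrow> cf_step A prev' C"
  unfolding cf_step_def by blast

lemma derivation_append: "derivation A \<pi> \<Longrightarrow> derivation A \<rho> \<Longrightarrow> derivation A (\<pi> @ \<rho>)"
proof (induction \<rho> rule: rev_induct)
  case (snoc X \<rho>)
  then have "cf_step A (\<pi> @ \<rho>) X"
    by (auto intro: cf_step_mono)
  then show ?case
    using snoc derivation_snoc[of A "\<pi> @ \<rho>" X] by simp
qed simp

lemma cf_step_frege: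
  "(ps, c) \<in> set frege_rules \<Longrightarrow> \<forall>D \<in> set Ds. wf_circuit D \<Longrightarrow>
   \<forall>p \<in> set ps. inst (circ_of p) Ds \<in> set prev \<Longrightarrow> cf_step A prev (inst (circ_of c) Ds)"
  unfolding cf_step_def by blast

lemma cf_step_mp:
  "\<forall>D \<in> set Ds. wf_circuit D \<Longrightarrow> inst (circ_of pA) Ds \<in> set prev \<Longrightarrow>
   inst (circ_of (FImp pA pB)) Ds \<in> set prev \<Longrightarrow> cf_step A prev (inst (circ_of pB) Ds)"
  by (rule cf_step_frege[of "[pA, FImp pA pB]"]) (auto simp: frege_rules_def)

lemma cf_step_axiom:
  "S \<in> A \<Longrightarrow> wf_circuit S \<Longrightarrow> \<forall>D \<in> set Ds. wf_circuit D \<Longrightarrow> cf_step A prev (inst S Ds)"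
  unfolding cf_step_def by blast

lemma cf_step_unfold:
  "C' \<in> set prev \<Longrightarrow> unfold_circuit C' = unfold_circuit C \<Longrightarrow> cf_step A prev C"
  unfolding cf_step_def by blast

lemma frege_rules_sound: "(ps, c) \<in> set frege_rules \<Longrightarrow> \<forall>p \<in> set ps. eval v p \<Longrightarrow> eval v c"
  unfolding frege_rules_def by auto

lemma cf_step_tautology:
  assumes A: "\<forall>S \<in> A. wf_circuit S \<longrightarrow> tautology S"
    and prev: "\<forall>Y \<in> set prev. tautology Y" and "cf_step A prev X"
  shows "tautology X"
  using \<open>cf_step A prev X\<close> unfolding cf_step_def
proof (elim disjE)
  assume "\<exists>(ps, c) \<in> set frege_rules. \<exists>Ds. (\<forall>D \<in> set Ds. wf_circuit D) \<and>
    X = inst (circ_of c) Ds \<and> (\<forall>p \<in> set ps. inst (circ_of p) Ds \<in> set prev)"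
  then obtain ps c Ds where rule: "(ps, c) \<in> set frege_rules" and Ds: "\<forall>D \<in> set Ds. wf_circuit D"
    and X: "X = inst (circ_of c) Ds" and ps: "\<forall>p \<in> set ps. inst (circ_of p) Ds \<in> set prev"
    by auto
  have "\<forall>p \<in> set ps. eval (\<lambda>i. eval v (subst_of Ds i)) p" for v
    using ps prev unfold_inst[OF wf_circ_of Ds]
    by (fastforce simp: tautology_def eval_fsubst)
  then show ?thesis
    using frege_rules_sound[OF rule] unfold_inst[OF wf_circ_of Ds]
    by (simp add: X tautology_def eval_fsubst)
next
  assume "\<exists>S \<in> A. wf_circuit S \<and> (\<exists>Ds. (\<forall>D \<in> set Ds. wf_circuit D) \<and> X = inst S Ds)"
  then show ?thesis
    using A unfold_inst by (fastforce simp: tautology_def eval_fsubst)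
next
  assume "\<exists>C' \<in> set prev. unfold_circuit C' = unfold_circuit X"
  then show ?thesis
    using prev by (auto simp: tautology_def)
qed

lemma derivation_tautologies:
  "\<forall>S \<in> A. wf_circuit S \<longrightarrow> tautology S \<Longrightarrow> derivation A \<pi> \<Longrightarrow> \<forall>X \<in> set \<pi>. tautology X"
  by (induction \<pi> rule: rev_induct) (auto intro: cf_step_tautology)

lemma unsound_false_axiom:
  assumes "\<not> sound A"
  shows "\<exists>S \<in> A. wf_circuit S \<and> \<not> tautology S"
proof -
  obtain \<pi> C where "is_proof A \<pi> C" and "\<not> tautology C"
    using assms by (auto simp: sound_def provable_def)
  then show ?thesis
    by (metis derivation_tautologies is_proof_iff_derivation last_in_set)
qed

section \<open>Frege derivability of formulas and Kalmar's lemma\<close>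

inductive derivable :: "form set \<Rightarrow> form \<Rightarrow> bool" for \<Gamma> where
  hyp: "\<phi> \<in> \<Gamma> \<Longrightarrow> derivable \<Gamma> \<phi>"
| axiom: "([], c) \<in> set frege_rules \<Longrightarrow> derivable \<Gamma> (fsubst \<sigma> c)"
| mp: "derivable \<Gamma> a \<Longrightarrow> derivable \<Gamma> (FImp a b) \<Longrightarrow> derivable \<Gamma> b"

lemma derivable_axiom_inst: "([], c) \<in> set frege_rules \<Longrightarrow> fsubst \<sigma> c = \<phi> \<Longrightarrow> derivable \<Gamma> \<phi>"
  using axiom by blast

lemma derivable_K: "derivable \<Gamma> (FImp a (FImp b a))"
  by (rule derivable_axiom_inst[where c = "FImp pA (FImp pB pA)" and \<sigma> = "nth [a, b]"])
    (simp_all add: frege_rules_def)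

lemma derivable_S: "derivable \<Gamma> (FImp (FImp a b) (FImp (FImp a (FImp b c)) (FImp a c)))"
  by (rule derivable_axiom_inst[where c = "FImp (FImp pA pB) (FImp (FImp pA (FImp pB pC)) (FImp pA pC))"
        and \<sigma> = "nth [a, b, c]"]) (simp_all add: frege_rules_def)

lemma derivable_conj_ax: "derivable \<Gamma> (FImp a (FImp b (FAnd a b)))"
  by (rule derivable_axiom_inst[where c = "FImp pA (FImp pB (FAnd pA pB))" and \<sigma> = "nth [a, b]"])
    (simp_all add: frege_rules_def)

lemma derivable_conj_fst_ax: "derivable \<Gamma> (FImp (FAnd a b) a)"
  by (rule derivable_axiom_inst[where c = "FImp (FAnd pA pB) pA" and \<sigma> = "nth [a, b]"])
    (simp_all add: frege_rules_def)

lemma derivable_conj_snd_ax: "derivable \<Gamma> (FImp (FAnd a b) b)"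
  by (rule derivable_axiom_inst[where c = "FImp (FAnd pA pB) pB" and \<sigma> = "nth [a, b]"])
    (simp_all add: frege_rules_def)

lemma derivable_disj_inl_ax: "derivable \<Gamma> (FImp a (FOr a b))"
  by (rule derivable_axiom_inst[where c = "FImp pA (FOr pA pB)" and \<sigma> = "nth [a, b]"])
    (simp_all add: frege_rules_def)

lemma derivable_disj_inr_ax: "derivable \<Gamma> (FImp b (FOr a b))"
  by (rule derivable_axiom_inst[where c = "FImp pB (FOr pA pB)" and \<sigma> = "nth [a, b]"])
    (simp_all add: frege_rules_def)

lemma derivable_disj_elim_ax: "derivable \<Gamma> (FImp (FImp a c) (FImp (FImp b c) (FImp (FOr a b) c)))"
  by (rule derivable_axiom_inst[where c = "FImp (FImp pA pC) (FImp (FImp pB pC) (FImp (FOr pA pB) pC))"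
        and \<sigma> = "nth [a, b, c]"]) (simp_all add: frege_rules_def)

lemma derivable_reductio_ax: "derivable \<Gamma> (FImp (FImp a b) (FImp (FImp a (FNot b)) (FNot a)))"
  by (rule derivable_axiom_inst[where c = "FImp (FImp pA pB) (FImp (FImp pA (FNot pB)) (FNot pA))"
        and \<sigma> = "nth [a, b]"]) (simp_all add: frege_rules_def)

lemma derivable_dne_ax: "derivable \<Gamma> (FImp (FNot (FNot a)) a)"
  by (rule derivable_axiom_inst[where c = "FImp (FNot (FNot pA)) pA" and \<sigma> = "nth [a]"])
    (simp_all add: frege_rules_def)

lemma derivable_top: "derivable \<Gamma> FTop"
  by (rule derivable_axiom_inst[where c = FTop and \<sigma> = FVar]) (simp_all add: frege_rules_def)

lemma derivable_not_bot: "derivable \<Gamma> (FNot FBot)"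
  by (rule derivable_axiom_inst[where c = "FNot FBot" and \<sigma> = FVar]) (simp_all add: frege_rules_def)

lemma derivable_mp2:
  assumes "derivable \<Gamma> (FImp a (FImp b c))" and "derivable \<Gamma> a" and "derivable \<Gamma> b"
  shows "derivable \<Gamma> c"
  using mp[OF assms(3) mp[OF assms(2) assms(1)]] .

lemma derivable_imp_refl: "derivable \<Gamma> (FImp a a)"
  using derivable_mp2[OF derivable_S derivable_K derivable_K] .

lemma derivable_imp_const: "derivable \<Gamma> b \<Longrightarrow> derivable \<Gamma> (FImp a b)"
  by (rule mp[OF _ derivable_K])

lemma derivable_insert: "derivable \<Gamma> \<phi> \<Longrightarrow> derivable (insert h \<Gamma>) \<phi>"
  by (induction rule: derivable.induct) (auto intro: derivable.hyp derivable.axiom dest: derivable.mp)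

lemma derivable_deduction: "derivable (insert h \<Gamma>) \<phi> \<Longrightarrow> derivable \<Gamma> (FImp h \<phi>)"
proof (induction rule: derivable.induct)
  case (hyp \<phi>)
  then consider "\<phi> = h" | "\<phi> \<in> \<Gamma>" by blast
  then show ?case
    by cases (simp add: derivable_imp_refl, rule derivable_imp_const[OF derivable.hyp])
next
  case (axiom c \<sigma>)
  then show ?case by (rule derivable_imp_const[OF derivable.axiom])
next
  case (mp a b)
  show ?case using derivable_mp2[OF derivable_S mp.IH] .
qed

lemma derivable_neg_intro:
  "derivable \<Gamma> (FImp a b) \<Longrightarrow> derivable \<Gamma> (FImp a (FNot b)) \<Longrightarrow> derivable \<Gamma> (FNot a)"
  by (rule derivable_mp2[OF derivable_reductio_ax])

lemma derivable_notnot: "derivable \<Gamma> a \<Longrightarrow> derivable \<Gamma> (FNot (FNot a))"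
  by (rule derivable_neg_intro[OF derivable_imp_const derivable_imp_refl])

lemma derivable_explosion: "derivable \<Gamma> a \<Longrightarrow> derivable \<Gamma> (FNot a) \<Longrightarrow> derivable \<Gamma> b"
  by (rule mp[OF derivable_neg_intro[OF derivable_imp_const derivable_imp_const] derivable_dne_ax])

lemma derivable_conj: "derivable \<Gamma> a \<Longrightarrow> derivable \<Gamma> b \<Longrightarrow> derivable \<Gamma> (FAnd a b)"
  by (rule derivable_mp2[OF derivable_conj_ax])

lemma derivable_not_conj1: "derivable \<Gamma> (FNot a) \<Longrightarrow> derivable \<Gamma> (FNot (FAnd a b))"
  by (rule derivable_neg_intro[OF derivable_conj_fst_ax derivable_imp_const])

lemma derivable_not_conj2: "derivable \<Gamma> (FNot b) \<Longrightarrow> derivable \<Gamma> (FNot (FAnd a b))"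
  by (rule derivable_neg_intro[OF derivable_conj_snd_ax derivable_imp_const])

lemma derivable_disj1: "derivable \<Gamma> a \<Longrightarrow> derivable \<Gamma> (FOr a b)"
  by (rule mp[OF _ derivable_disj_inl_ax])

lemma derivable_disj2: "derivable \<Gamma> b \<Longrightarrow> derivable \<Gamma> (FOr a b)"
  by (rule mp[OF _ derivable_disj_inr_ax])

lemma derivable_neg_imp:
  assumes "derivable \<Gamma> (FNot a)"
  shows "derivable \<Gamma> (FImp a b)"
proof -
  have "derivable (insert a \<Gamma>) b"
    using derivable_explosion[OF derivable.hyp[OF insertI1] derivable_insert[OF assms]] .
  then show ?thesis by (rule derivable_deduction)
qed

lemma derivable_not_disj:
  assumes "derivable \<Gamma> (FNot a)" and "derivable \<Gamma> (FNot b)"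
  shows "derivable \<Gamma> (FNot (FOr a b))"
proof -
  have "derivable \<Gamma> (FImp (FOr a b) a)"
    using derivable_mp2[OF derivable_disj_elim_ax derivable_imp_refl derivable_neg_imp[OF assms(2)]] .
  then show ?thesis
    using derivable_neg_intro derivable_imp_const[OF assms(1)] by blast
qed

lemma derivable_not_imp:
  assumes "derivable \<Gamma> a" and "derivable \<Gamma> (FNot b)"
  shows "derivable \<Gamma> (FNot (FImp a b))"
proof -
  have "derivable (insert (FImp a b) \<Gamma>) b"
    using mp[OF derivable_insert[OF assms(1)] derivable.hyp[OF insertI1]] .
  then show ?thesis
    by (rule derivable_neg_intro[OF derivable_deduction derivable_imp_const[OF assms(2)]])
qed

lemma kalmar_closed: "fvars \<phi> = {} \<Longrightarrow> derivable \<Gamma> (if eval v \<phi> then \<phi> else FNot \<phi>)"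
proof (induction \<phi>)
  case (FNot a)
  then show ?case by (cases "eval v a") (simp_all add: derivable_notnot)
next
  case (FAnd a b)
  then show ?case
    by (simp split: if_splits; blast intro: derivable_conj derivable_not_conj1 derivable_not_conj2)
next
  case (FOr a b)
  then show ?case
    by (simp split: if_splits; blast intro: derivable_disj1 derivable_disj2 derivable_not_disj)
next
  case (FImp a b)
  then show ?case
    by (simp split: if_splits; blast intro: derivable_imp_const derivable_neg_imp derivable_not_imp)
qed (simp_all add: derivable_top derivable_not_bot)

section \<open>Simulating Frege derivations in CF + A\<close>

definition cf_derivable :: "circuit set \<Rightarrow> form \<Rightarrow> bool" where
  "cf_derivable A \<phi> \<longleftrightarrow> (\<exists>\<pi>. derivation A \<pi> \<and> (\<exists>X \<in> set \<pi>. unfold_circuit X = \<phi>))"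

lemma frege_rules_fvars: "(ps, c) \<in> set frege_rules \<Longrightarrow> fvars c \<subseteq> {0, 1, 2}"
  unfolding frege_rules_def by auto

lemma cf_derivable_axiom:
  assumes "([], c) \<in> set frege_rules"
  shows "cf_derivable A (fsubst \<sigma> c)"
proof -
  define Ds where "Ds = map (circ_of \<circ> \<sigma>) [0..<3]"
  have Ds: "\<forall>D \<in> set Ds. wf_circuit D"
    by (auto simp: Ds_def wf_circ_of)
  define X where "X = inst (circ_of c) Ds"
  have "unfold_circuit X = fsubst (subst_of Ds) c"
    unfolding X_def using unfold_inst[OF wf_circ_of Ds] by simp
  also have "\<dots> = fsubst \<sigma> c"
    using frege_rules_fvars[OF assms] by (intro fsubst_cong) (auto simp: subst_of_def Ds_def)
  finally have "unfold_circuit X = fsubst \<sigma> c" .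
  moreover have "derivation A [X]"
    using derivation_snocI[OF derivation_Nil wf_inst[OF wf_circ_of Ds]] cf_step_frege[OF assms Ds]
    by (simp add: X_def)
  ultimately show ?thesis
    unfolding cf_derivable_def by (intro exI[of _ "[X]"]) auto
qed

lemma cf_derivable_mp:
  assumes "cf_derivable A a" and "cf_derivable A (FImp a b)"
  shows "cf_derivable A b"
proof -
  obtain \<pi>1 X1 where \<pi>1: "derivation A \<pi>1" "X1 \<in> set \<pi>1" "unfold_circuit X1 = a"
    using assms(1) unfolding cf_derivable_def by blast
  obtain \<pi>2 X2 where \<pi>2: "derivation A \<pi>2" "X2 \<in> set \<pi>2" "unfold_circuit X2 = FImp a b"
    using assms(2) unfolding cf_derivable_def by blast
  define Ds where "Ds = [circ_of a, circ_of b]"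
  have Ds: "\<forall>D \<in> set Ds. wf_circuit D"
    by (simp add: Ds_def wf_circ_of)
  define Y1 Y2 Z where "Y1 = inst (circ_of pA) Ds" and "Y2 = inst (circ_of (FImp pA pB)) Ds"
    and "Z = inst (circ_of pB) Ds"
  have wf: "wf_circuit Y1" "wf_circuit Y2" "wf_circuit Z"
    unfolding Y1_def Y2_def Z_def using wf_inst[OF wf_circ_of Ds] by auto
  have unf: "unfold_circuit Y1 = a" "unfold_circuit Y2 = FImp a b" "unfold_circuit Z = b"
    unfolding Y1_def Y2_def Z_def using unfold_inst[OF wf_circ_of Ds]
    by (auto simp: subst_of_def Ds_def)
  have "derivation A (\<pi>1 @ \<pi>2)"
    using derivation_append[OF \<pi>1(1) \<pi>2(1)] .
  then have "derivation A ((\<pi>1 @ \<pi>2) @ [Y1])"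
    by (rule derivation_snocI[OF _ wf(1) cf_step_unfold[of X1]]) (use \<pi>1 unf in auto)
  then have "derivation A (((\<pi>1 @ \<pi>2) @ [Y1]) @ [Y2])"
    by (rule derivation_snocI[OF _ wf(2) cf_step_unfold[of X2]]) (use \<pi>2 unf in auto)
  then have "derivation A ((((\<pi>1 @ \<pi>2) @ [Y1]) @ [Y2]) @ [Z])"
    unfolding Z_def by (rule derivation_snocI[OF _ wf(3)[unfolded Z_def] cf_step_mp[OF Ds]])
      (simp_all add: Y1_def Y2_def)
  then show ?thesis
    using unf(3) unfolding cf_derivable_def by fastforce
qed

lemma derivable_imp_cf_derivable:
  "derivable \<Gamma> \<phi> \<Longrightarrow> \<forall>\<psi> \<in> \<Gamma>. cf_derivable A \<psi> \<Longrightarrow> cf_derivable A \<phi>"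
proof (induction rule: derivable.induct)
  case (mp a b)
  then show ?case using cf_derivable_mp[of A a b] by blast
qed (auto intro: cf_derivable_axiom)

lemma cf_derivable_bot:
  assumes "\<not> sound A"
  shows "cf_derivable A FBot"
proof -
  obtain S where S: "S \<in> A" "wf_circuit S" and "\<not> tautology S"
    using unsound_false_axiom[OF assms] by blast
  then obtain v where v: "\<not> eval v (unfold_circuit S)"
    by (auto simp: tautology_def)
  obtain N where N: "\<forall>i \<in> fvars (unfold_circuit S). i < N"
    using finite_fvars finite_nat_set_iff_bounded by blast
  define Ds where "Ds = map (\<lambda>i. circ_of (if v i then FTop else FBot)) [0..<N]"
  have Ds: "\<forall>D \<in> set Ds. wf_circuit D"
    by (auto simp: Ds_def wf_circ_of)
  define F where "F = unfold_circuit (inst S Ds)"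
  have F: "F = fsubst (subst_of Ds) (unfold_circuit S)"
    unfolding F_def using unfold_inst[OF S(2) Ds] .
  have const: "subst_of Ds i = (if v i then FTop else FBot)" if "i \<in> fvars (unfold_circuit S)" for i
    using N that by (simp add: subst_of_def Ds_def)
  have "fvars F = {}"
    unfolding F fvars_fsubst using const by simp
  moreover have "eval (\<lambda>i. eval v (subst_of Ds i)) (unfold_circuit S) = eval v (unfold_circuit S)"
    using const by (intro eval_cong) simp
  then have "\<not> eval v F"
    unfolding F eval_fsubst using v by simp
  ultimately have "derivable {F} (FNot F)"
    using kalmar_closed[of F "{F}" v] by simp
  then have "derivable {F} FBot"
    using derivable_explosion[OF derivable.hyp[OF singletonI]] by blast
  moreover have "cf_derivable A F"
  proof -
    have "derivation A [inst S Ds]"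
      using derivation_snocI[OF derivation_Nil wf_inst[OF S(2) Ds] cf_step_axiom[OF S Ds]] by simp
    then show ?thesis
      unfolding cf_derivable_def F_def by (intro exI[of _ "[inst S Ds]"]) simp
  qed
  ultimately show ?thesis
    using derivable_imp_cf_derivable[of "{F}" FBot A] by simp
qed

lemma proof_length_append: "proof_length (\<pi> @ \<rho>) = proof_length \<pi> + proof_length \<rho>"
  by (simp add: proof_length_def)

text \<open>Modus ponens needs both premises as instances under one substitution, here [FBot, C];
  the unfolding rule produces them from a line computing FBot and from the axiom instance
  FBot --> C.\<close>

definition ex_falso_lines :: "circuit \<Rightarrow> circuit list" where
  "ex_falso_lines C =
     [inst (circ_of (FImp FBot pA)) [C], inst (circ_of pA) [circ_of FBot, C],
      inst (circ_of (FImp pA pB)) [circ_of FBot, C], inst (circ_of pB) [circ_of FBot, C], C]"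

lemma proof_length_ex_falso_lines:
  assumes "wf_circuit C"
  shows "proof_length (ex_falso_lines C) \<le> 11 + 5 * csize C"
proof -
  have "\<forall>D \<in> set [C]. wf_circuit D" "\<forall>D \<in> set [circ_of FBot, C]. wf_circuit D"
    using assms by (simp_all add: wf_circ_of)
  note bound = csize_inst[OF wf_circ_of this(1)] csize_inst[OF wf_circ_of this(2)]
  have "csize (circ_of FBot) = 1" "csize (circ_of pA) = 1" "csize (circ_of pB) = 1"
    "csize (circ_of (FImp FBot pA)) = 3" "csize (circ_of (FImp pA pB)) = 3"
    by (simp_all add: circ_of_def csize_def)
  then show ?thesis
    using bound(1)[of "FImp FBot pA"] bound(2)[of pA] bound(2)[of "FImp pA pB"] bound(2)[of pB]
    unfolding ex_falso_lines_def proof_length_def by simp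
qed

lemma derivation_ex_falso_lines:
  assumes \<pi>: "derivation A \<pi>" "X \<in> set \<pi>" "unfold_circuit X = FBot" and C: "wf_circuit C"
  shows "derivation A (\<pi> @ ex_falso_lines C)"
proof -
  define Ds where "Ds = [circ_of FBot, C]"
  have Ds: "\<forall>D \<in> set Ds. wf_circuit D" and C': "\<forall>D \<in> set [C]. wf_circuit D"
    using C by (simp_all add: Ds_def wf_circ_of)
  define X1 X2 X3 X4 where "X1 = inst (circ_of (FImp FBot pA)) [C]"
    and "X2 = inst (circ_of pA) Ds" and "X3 = inst (circ_of (FImp pA pB)) Ds"
    and "X4 = inst (circ_of pB) Ds"
  have wf: "wf_circuit X1" "wf_circuit X2" "wf_circuit X3" "wf_circuit X4"
    unfolding X1_def X2_def X3_def X4_def using wf_inst[OF wf_circ_of] Ds C' by auto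
  have unf: "unfold_circuit X1 = FImp FBot (unfold_circuit C)" "unfold_circuit X2 = FBot"
    "unfold_circuit X3 = FImp FBot (unfold_circuit C)" "unfold_circuit X4 = unfold_circuit C"
    unfolding X1_def X2_def X3_def X4_def using unfold_inst[OF wf_circ_of] Ds C'
    by (auto simp: subst_of_def Ds_def)
  have "derivation A (\<pi> @ [X1])"
    using \<pi>(1) wf(1) cf_step_frege[of "[]" "FImp FBot pA" "[C]"] C'
    by (simp add: X1_def frege_rules_def)
  then have "derivation A ((\<pi> @ [X1]) @ [X2])"
    by (rule derivation_snocI[OF _ wf(2) cf_step_unfold[of X]]) (use \<pi> unf in auto)
  then have "derivation A (((\<pi> @ [X1]) @ [X2]) @ [X3])"
    by (rule derivation_snocI[OF _ wf(3) cf_step_unfold[of X1]]) (use unf in auto)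
  then have "derivation A ((((\<pi> @ [X1]) @ [X2]) @ [X3]) @ [X4])"
    unfolding X4_def by (rule derivation_snocI[OF _ wf(4)[unfolded X4_def] cf_step_mp[OF Ds]])
      (simp_all add: X2_def X3_def)
  then have "derivation A (((((\<pi> @ [X1]) @ [X2]) @ [X3]) @ [X4]) @ [C])"
    by (rule derivation_snocI[OF _ C cf_step_unfold[of X4]]) (use unf in auto)
  moreover have "ex_falso_lines C = [X1, X2, X3, X4, C]"
    unfolding ex_falso_lines_def X1_def X2_def X3_def X4_def Ds_def ..
  ultimately show ?thesis by simp
qed

theorem mainTheorem5:
  fixes A :: "circuit set"
  assumes "\<not> sound A"
  shows "\<exists>c::nat. \<forall>C. wf_circuit C \<longrightarrow>
           (\<exists>\<pi>. is_proof A \<pi> C \<and> proof_length \<pi> \<le> c * csize C)"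
proof -
  obtain \<pi>\<^sub>0 X where \<pi>\<^sub>0: "derivation A \<pi>\<^sub>0" "X \<in> set \<pi>\<^sub>0" "unfold_circuit X = FBot"
    using cf_derivable_bot[OF assms] unfolding cf_derivable_def by blast
  have "is_proof A (\<pi>\<^sub>0 @ ex_falso_lines C) C \<and>
      proof_length (\<pi>\<^sub>0 @ ex_falso_lines C) \<le> (proof_length \<pi>\<^sub>0 + 16) * csize C"
    if C: "wf_circuit C" for C
  proof -
    have "1 \<le> csize C"
      using C by (simp add: wf_circuit_def csize_def)
    then have "proof_length \<pi>\<^sub>0 \<le> proof_length \<pi>\<^sub>0 * csize C" "16 \<le> 16 * csize C"
      by simp_all
    then have "proof_length \<pi>\<^sub>0 + 11 + 5 * csize C \<le> (proof_length \<pi>\<^sub>0 + 16) * csize C"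
      unfolding distrib_right by linarith
    then show ?thesis
      using derivation_ex_falso_lines[OF \<pi>\<^sub>0 C] proof_length_ex_falso_lines[OF C]
      by (simp add: is_proof_iff_derivation proof_length_append ex_falso_lines_def)
  qed
  then show ?thesis by blast
qed

end
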